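(* Let $k$ be a difference field of characteristic $0$ and $R=k\{y_1,\ldots,y_n\}$. Every radical well-mixed monomial $\sigma$-ideal $I$ of $R$ is generated by finitely many monomials as a radical well-mixed $\sigma$-ideal, i.e. $I=\langle F\rangle_r$ for some finite set $F$ of monomials.
   Context: A difference field is a field $k$ with a ring endomorphism $\sigma$; $R=k\{y_1,\ldots,y_n\}$ is the polynomial ring over $k$ in the variables $\sigma^j(y_i)$, with $\sigma$ extended naturally. For $p=\sum_ic_ix^i\in\mathbb{N}[x]$ and $a\in R$, $a^p=\prod_i(\sigma^i(a))^{c_i}$; monomials are $\mathbf{y}^{\mathbf{u}}=y_1^{u_1}\cdots y_n^{u_n}$ with $\mathbf{u}\in\mathbb{N}[x]^n$. A $\sigma$-ideal is an ideal stable under $\sigma$; monomial if generated by monomials; well-mixed if $ab\in I\Rightarrow a\sigma(b)\in I$. $\langle F\rangle_r$ is the smallest radical well-mixed $\sigma$-ideal containing $F$. *)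

theory Defs
  imports Main "HOL-Library.Poly_Mapping"
begin

text \<open>Variables of the difference polynomial ring k{y_v : v in 'v}: the pair (v, j) stands
 for sigma^j(y_v).\<close>

type_synonym 'v dmon = "('v \<times> nat) \<Rightarrow>\<^sub>0 nat"
type_synonym ('v, 'a) dpoly = "'v dmon \<Rightarrow>\<^sub>0 'a"

definition difference_field :: "('a::field \<Rightarrow> 'a) \<Rightarrow> bool" where
  "difference_field \<sigma> \<longleftrightarrow> (\<forall>a b. \<sigma> (a + b) = \<sigma> a + \<sigma> b) \<and> (\<forall>a b. \<sigma> (a * b) = \<sigma> a * \<sigma> b)
      \<and> \<sigma> 1 = 1"

definition shift_mon :: "'v dmon \<Rightarrow> 'v dmon" where
  "shift_mon m = (\<Sum>x\<in>Poly_Mapping.keys m. Poly_Mapping.single (fst x, Suc (snd x)) (Poly_Mapping.lookup m x))"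

definition sigma_ext :: "('a::field \<Rightarrow> 'a) \<Rightarrow> ('v, 'a) dpoly \<Rightarrow> ('v, 'a) dpoly" where
  "sigma_ext \<sigma> p = (\<Sum>m\<in>Poly_Mapping.keys p. Poly_Mapping.single (shift_mon m) (\<sigma> (Poly_Mapping.lookup p m)))"

definition is_ideal :: "'r::comm_ring_1 set \<Rightarrow> bool" where
  "is_ideal I \<longleftrightarrow> 0 \<in> I \<and> (\<forall>a\<in>I. \<forall>b\<in>I. a + b \<in> I) \<and> (\<forall>a\<in>I. \<forall>r. r * a \<in> I)"

definition ideal_gen :: "'r::comm_ring_1 set \<Rightarrow> 'r set" where
  "ideal_gen S = \<Inter>{J. is_ideal J \<and> S \<subseteq> J}"

definition is_radical :: "'r::comm_ring_1 set \<Rightarrow> bool" where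
  "is_radical I \<longleftrightarrow> (\<forall>a (n::nat). a ^ n \<in> I \<longrightarrow> a \<in> I)"

definition is_sigma_ideal :: "('a::field \<Rightarrow> 'a) \<Rightarrow> ('v, 'a) dpoly set \<Rightarrow> bool" where
  "is_sigma_ideal \<sigma> I \<longleftrightarrow> is_ideal I \<and> (\<forall>a\<in>I. sigma_ext \<sigma> a \<in> I)"

definition is_well_mixed :: "('a::field \<Rightarrow> 'a) \<Rightarrow> ('v, 'a) dpoly set \<Rightarrow> bool" where
  "is_well_mixed \<sigma> I \<longleftrightarrow> (\<forall>a b. a * b \<in> I \<longrightarrow> a * sigma_ext \<sigma> b \<in> I)"

definition is_rwm_sigma_ideal :: "('a::field \<Rightarrow> 'a) \<Rightarrow> ('v, 'a) dpoly set \<Rightarrow> bool" where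
  "is_rwm_sigma_ideal \<sigma> I \<longleftrightarrow> is_sigma_ideal \<sigma> I \<and> is_radical I \<and> is_well_mixed \<sigma> I"

definition dmonomials :: "('v, 'a::field) dpoly set" where
  "dmonomials = {Poly_Mapping.single m 1 | m. True}"

definition is_monomial_ideal :: "('v, 'a::field) dpoly set \<Rightarrow> bool" where
  "is_monomial_ideal I \<longleftrightarrow> (\<exists>S \<subseteq> dmonomials. I = ideal_gen S)"

definition rwm_gen :: "('a::field \<Rightarrow> 'a) \<Rightarrow> ('v, 'a) dpoly set \<Rightarrow> ('v, 'a) dpoly set" where
  "rwm_gen \<sigma> F = \<Inter>{J. is_rwm_sigma_ideal \<sigma> J \<and> F \<subseteq> J}"

end

theory Submission
  imports Defs
begin

text \<open>
  In a radical well-mixed ideal \<open>J\<close> (with \<open>\<sigma> 1 = 1\<close>) membership of a monomial depends only on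
  which variables \<open>\<sigma>\<^sup>j(y\<^sub>v)\<close> occur in it, and monotonically in their orders \<open>j\<close>:
  well-mixedness, applied to \<open>a b \<in> J\<close> with \<open>b = \<sigma>\<^sup>j(y\<^sub>v)\<^sup>e\<close>, raises the order of any variable of a
  monomial in \<open>J\<close>, and radicality lets one change exponents freely, since \<open>y\<^sup>p\<close> divides a power
  of \<open>y\<^sup>q\<close> whenever the support of \<open>p\<close> lies in that of \<open>q\<close>. So \<open>J\<close> contains every monomial
  dominating one of its monomials. Recording, for each \<open>y\<^sub>v\<close>, one plus the highest order with
  which it occurs maps monomials into \<open>\<nat>\<^sup>n\<close> so that the pointwise order implies domination;
  Dickson's lemma then gives finitely many monomials of \<open>I\<close> dominating all others, and these
  generate \<open>I\<close> as a radical well-mixed \<open>\<sigma>\<close>-ideal.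
\<close>

lemma shift_mon_single: "shift_mon (Poly_Mapping.single (v, j) e) = Poly_Mapping.single (v, Suc j) e"
  unfolding shift_mon_def by (cases "e = 0") simp_all

lemma sigma_ext_monomial:
  "\<sigma> 1 = 1 \<Longrightarrow> sigma_ext \<sigma> (Poly_Mapping.single m (1::'a::field)) = Poly_Mapping.single (shift_mon m) 1"
  unfolding sigma_ext_def by simp

lemma well_mixed_monomial_raise_order:
  fixes J :: "('v, 'a::field) dpoly set"
  assumes wm: "is_well_mixed \<sigma> J" and \<sigma>1: "\<sigma> 1 = 1"
    and mem: "Poly_Mapping.single (n + Poly_Mapping.single (v, j) e) 1 \<in> J" and "j \<le> j'"
  shows "Poly_Mapping.single (n + Poly_Mapping.single (v, j') e) 1 \<in> J"
proof -
  have step: "Poly_Mapping.single (n + Poly_Mapping.single (v, Suc i) e) (1::'a) \<in> J"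
    if "Poly_Mapping.single (n + Poly_Mapping.single (v, i) e) (1::'a) \<in> J" for i
  proof -
    have "Poly_Mapping.single n (1::'a) * Poly_Mapping.single (Poly_Mapping.single (v, i) e) 1 \<in> J"
      using that by (simp add: mult_single)
    then have "Poly_Mapping.single n (1::'a) * sigma_ext \<sigma> (Poly_Mapping.single (Poly_Mapping.single (v, i) e) 1) \<in> J"
      using wm unfolding is_well_mixed_def by blast
    then show ?thesis by (simp add: \<sigma>1 sigma_ext_monomial shift_mon_single mult_single)
  qed
  have "Poly_Mapping.single (n + Poly_Mapping.single (v, j + d) e) (1::'a) \<in> J" for d
    by (induction d) (simp_all add: mem step)
  from this[of "j' - j"] show ?thesis using \<open>j \<le> j'\<close> by simp
qed

definition mon_dominated :: "'v dmon \<Rightarrow> 'v dmon \<Rightarrow> bool" where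
  "mon_dominated m m' \<longleftrightarrow> (\<forall>(v, j)\<in>Poly_Mapping.keys m. \<exists>j'\<ge>j. (v, j') \<in> Poly_Mapping.keys m')"

lemma well_mixed_monomial_into_keys:
  fixes J :: "('v, 'a::field) dpoly set"
  assumes wm: "is_well_mixed \<sigma> J" and \<sigma>1: "\<sigma> 1 = 1"
  shows "Poly_Mapping.single (n + m) (1::'a) \<in> J \<Longrightarrow> mon_dominated m m' \<Longrightarrow>
    \<exists>p. Poly_Mapping.keys p \<subseteq> Poly_Mapping.keys m' \<and> Poly_Mapping.single (n + p) (1::'a) \<in> J"
proof (induction m arbitrary: n rule: update_induct)
  case const
  then show ?case by (intro exI[of _ 0]) simp
next
  case (update m x e)
  obtain v j where x: "x = (v, j)" by fastforce
  have upd: "Poly_Mapping.update x e m = Poly_Mapping.single (v, j) e + m"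
    using update.hyps(1) x
    by (intro poly_mapping_eqI) (auto simp: lookup_update lookup_add lookup_single in_keys_iff when_def)
  have "(v, j) \<in> Poly_Mapping.keys (Poly_Mapping.update x e m)"
    using update.hyps(2) x by (simp add: keys_update)
  then obtain j' where "j \<le> j'" and j': "(v, j') \<in> Poly_Mapping.keys m'"
    using update.prems(2) unfolding mon_dominated_def by blast
  have "mon_dominated m m'"
    using update.prems(2) update.hyps(2) unfolding mon_dominated_def by (auto simp: keys_update)
  moreover have "Poly_Mapping.single ((n + Poly_Mapping.single (v, j) e) + m) (1::'a) \<in> J"
    using update.prems(1) upd by (simp add: add.assoc)
  ultimately obtain p where p: "Poly_Mapping.keys p \<subseteq> Poly_Mapping.keys m'"
    and "Poly_Mapping.single ((n + Poly_Mapping.single (v, j) e) + p) (1::'a) \<in> J"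
    using update.IH by blast
  then have "Poly_Mapping.single ((n + p) + Poly_Mapping.single (v, j) e) (1::'a) \<in> J"
    by (simp add: ac_simps)
  from well_mixed_monomial_raise_order[OF wm \<sigma>1 this \<open>j \<le> j'\<close>]
  have "Poly_Mapping.single (n + (p + Poly_Mapping.single (v, j') e)) (1::'a) \<in> J"
    by (simp add: add.assoc)
  moreover have "Poly_Mapping.keys (p + Poly_Mapping.single (v, j') e) \<subseteq> Poly_Mapping.keys m'"
    using keys_add[of p "Poly_Mapping.single (v, j') e"] p j' by (auto split: if_splits)
  ultimately show ?case by blast
qed

lemma radical_ideal_dvd_power:
  fixes J :: "'r::comm_ring_1 set"
  assumes "is_ideal J" and "is_radical J" and "a \<in> J" and "a dvd b ^ N"
  shows "b \<in> J"
proof -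
  obtain c where "b ^ N = c * a" using \<open>a dvd b ^ N\<close> by (auto simp: dvd_def mult.commute)
  then have "b ^ N \<in> J" using assms(1,3) unfolding is_ideal_def by simp
  then show ?thesis using assms(2) unfolding is_radical_def by blast
qed

lemma monomial_power: "Poly_Mapping.single m (1::'a::comm_semiring_1) ^ N = Poly_Mapping.single (\<Sum>i<N. m) 1"
  by (induction N) (simp_all add: mult_single add.commute)

lemma monomial_dvd_monomial:
  fixes p q :: "'b \<Rightarrow>\<^sub>0 nat"
  assumes "\<And>x. Poly_Mapping.lookup p x \<le> Poly_Mapping.lookup q x"
  shows "Poly_Mapping.single p (1::'a::comm_semiring_1) dvd Poly_Mapping.single q 1"
proof -
  have "q = p + (q - p)"
    by (rule poly_mapping_eqI) (simp add: lookup_add lookup_minus assms)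
  then have "Poly_Mapping.single q (1::'a) = Poly_Mapping.single p 1 * Poly_Mapping.single (q - p) 1"
    by (metis mult_single mult_1)
  then show ?thesis by simp
qed

lemma radical_monomial_keys_subset:
  fixes J :: "('v, 'a::field) dpoly set"
  assumes "is_ideal J" and "is_radical J"
    and "Poly_Mapping.single p 1 \<in> J" and "Poly_Mapping.keys p \<subseteq> Poly_Mapping.keys q"
  shows "Poly_Mapping.single q 1 \<in> J"
proof -
  define N where "N = (\<Sum>x\<in>Poly_Mapping.keys p. Poly_Mapping.lookup p x)"
  have "Poly_Mapping.lookup p x \<le> N * Poly_Mapping.lookup q x" for x
  proof (cases "x \<in> Poly_Mapping.keys p")
    case True
    then have "Poly_Mapping.lookup p x \<le> N"
      unfolding N_def by (intro member_le_sum) simp_all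
    moreover have "x \<in> Poly_Mapping.keys q"
      using True assms(4) by blast
    then have "1 \<le> Poly_Mapping.lookup q x"
      by (simp add: in_keys_iff Suc_le_eq)
    ultimately show ?thesis using mult_le_mono[of "Poly_Mapping.lookup p x" N 1 "Poly_Mapping.lookup q x"] by simp
  qed (simp add: in_keys_iff)
  then have "Poly_Mapping.single p (1::'a) dvd Poly_Mapping.single (\<Sum>i<N. q) 1"
    by (intro monomial_dvd_monomial) (simp add: lookup_sum)
  then have "Poly_Mapping.single p (1::'a) dvd Poly_Mapping.single q 1 ^ N"
    by (simp only: monomial_power)
  with assms(1-3) show ?thesis by (rule radical_ideal_dvd_power)
qed

lemma rwm_monomial_dominated:
  fixes J :: "('v, 'a::field) dpoly set"
  assumes "is_ideal J" and "is_radical J" and "is_well_mixed \<sigma> J" and "\<sigma> 1 = 1"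
    and "Poly_Mapping.single m 1 \<in> J" and "mon_dominated m m'"
  shows "Poly_Mapping.single m' 1 \<in> J"
proof -
  have "Poly_Mapping.single (0 + m) (1::'a) \<in> J" using assms(5) by simp
  from well_mixed_monomial_into_keys[OF assms(3,4) this assms(6)]
  obtain p where "Poly_Mapping.single p (1::'a) \<in> J" and "Poly_Mapping.keys p \<subseteq> Poly_Mapping.keys m'"
    by auto
  with assms(1,2) show ?thesis by (rule radical_monomial_keys_subset)
qed

text \<open>Shifting by one keeps variables that do not occur (profile 0) below every order.\<close>

definition order_profile :: "'v dmon \<Rightarrow> 'v \<Rightarrow> nat" where
  "order_profile m v = Max (insert 0 {Suc j | j. (v, j) \<in> Poly_Mapping.keys m})"

lemma finite_orders_of_var: "finite {Suc j | j. (v, j) \<in> Poly_Mapping.keys m}"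
proof -
  have "{Suc j | j. (v, j) \<in> Poly_Mapping.keys m} \<subseteq> (\<lambda>x. Suc (snd x)) ` Poly_Mapping.keys m"
    by force
  then show ?thesis by (rule finite_subset) simp
qed

lemma order_profile_ge: "(v, j) \<in> Poly_Mapping.keys m \<Longrightarrow> Suc j \<le> order_profile m v"
  unfolding order_profile_def using finite_orders_of_var by (intro Max_ge) auto

lemma order_profile_pos:
  assumes "0 < order_profile m v"
  obtains j where "(v, j) \<in> Poly_Mapping.keys m" and "order_profile m v = Suc j"
proof -
  have "order_profile m v \<in> insert 0 {Suc j | j. (v, j) \<in> Poly_Mapping.keys m}"
    unfolding order_profile_def using finite_orders_of_var by (intro Max_in) auto
  with assms that show ?thesis by auto
qed

lemma mon_dominated_if_order_profile_le:
  assumes "order_profile m \<le> order_profile m'"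
  shows "mon_dominated m m'"
  unfolding mon_dominated_def
proof (intro ballI, clarify)
  fix v j assume "(v, j) \<in> Poly_Mapping.keys m"
  then have "Suc j \<le> order_profile m v" by (rule order_profile_ge)
  also have "\<dots> \<le> order_profile m' v" using assms by (rule le_funD)
  finally have le: "Suc j \<le> order_profile m' v" .
  then have "0 < order_profile m' v" by simp
  then obtain j' where "(v, j') \<in> Poly_Mapping.keys m'" and "order_profile m' v = Suc j'"
    by (rule order_profile_pos)
  with le show "\<exists>j'\<ge>j. (v, j') \<in> Poly_Mapping.keys m'" by auto
qed

lemma dominating_subset_insert:
  fixes X :: "('d \<Rightarrow> nat) set"
  assumes IH: "\<And>Y :: ('d \<Rightarrow> nat) set. \<exists>F\<subseteq>Y. finite F \<and> (\<forall>y\<in>Y. \<exists>f\<in>F. \<forall>v\<in>D. f v \<le> y v)"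
  shows "\<exists>F\<subseteq>X. finite F \<and> (\<forall>x\<in>X. \<exists>f\<in>F. \<forall>v\<in>insert w D. f v \<le> x v)"
proof -
  obtain F0 where F0: "F0 \<subseteq> X" "finite F0" and dom0: "\<forall>x\<in>X. \<exists>f\<in>F0. \<forall>v\<in>D. f v \<le> x v"
    using IH[of X] by blast
  have "\<exists>G\<subseteq>{x\<in>X. x w = k}. finite G \<and> (\<forall>x\<in>{x\<in>X. x w = k}. \<exists>g\<in>G. \<forall>v\<in>D. g v \<le> x v)" for k
    using IH[of "{x\<in>X. x w = k}"] .
  then have "\<exists>G. \<forall>k. G k \<subseteq> {x\<in>X. x w = k} \<and> finite (G k) \<and>
      (\<forall>x\<in>{x\<in>X. x w = k}. \<exists>g\<in>G k. \<forall>v\<in>D. g v \<le> x v)"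
    by (intro choice) blast
  then obtain G where G: "\<forall>k. G k \<subseteq> {x\<in>X. x w = k} \<and> finite (G k) \<and>
      (\<forall>x\<in>{x\<in>X. x w = k}. \<exists>g\<in>G k. \<forall>v\<in>D. g v \<le> x v)"
    by blast
  \<comment> \<open>an \<open>x\<close> not dominated at \<open>w\<close> by its dominator in \<open>F0\<close> has \<open>x w < M\<close>, so a slice \<open>G (x w)\<close> covers it\<close>
  define M where "M = Max ((\<lambda>f. f w) ` F0)"
  define F where "F = F0 \<union> (\<Union>k<M. G k)"
  have "\<exists>f\<in>F. \<forall>v\<in>insert w D. f v \<le> x v" if "x \<in> X" for x
  proof -
    obtain f where "f \<in> F0" and f: "\<forall>v\<in>D. f v \<le> x v" using dom0 \<open>x \<in> X\<close> by blast
    show ?thesis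
    proof (cases "f w \<le> x w")
      case True
      then show ?thesis using \<open>f \<in> F0\<close> f unfolding F_def by blast
    next
      case False
      have "f w \<le> M" unfolding M_def using \<open>f \<in> F0\<close> F0(2) by simp
      then have "x w < M" using False by simp
      obtain g where "g \<in> G (x w)" and "\<forall>v\<in>D. g v \<le> x v"
        using G \<open>x \<in> X\<close> by blast
      moreover have "g w = x w" using G \<open>g \<in> G (x w)\<close> by blast
      ultimately have "g \<in> F" and "\<forall>v\<in>insert w D. g v \<le> x v"
        using \<open>x w < M\<close> unfolding F_def by auto
      then show ?thesis by blast
    qed
  qed
  moreover have "F \<subseteq> X" and "finite F" unfolding F_def using F0 G by auto
  ultimately show ?thesis by blast
qed

lemma finite_dominating_subset:
  fixes X :: "('d \<Rightarrow> nat) set"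
  assumes "finite D"
  shows "\<exists>F\<subseteq>X. finite F \<and> (\<forall>x\<in>X. \<exists>f\<in>F. \<forall>v\<in>D. f v \<le> x v)"
  using assms
proof (induction D arbitrary: X rule: finite_induct)
  case empty
  show ?case
  proof (cases "X = {}")
    case False
    then obtain x where "x \<in> X" by blast
    then show ?thesis by (intro exI[of _ "{x}"]) auto
  qed simp
next
  case (insert w D)
  show ?case by (rule dominating_subset_insert) (rule insert.IH)
qed

lemma finite_dominance_basis:
  fixes M :: "'v::finite dmon set"
  shows "\<exists>F\<subseteq>M. finite F \<and> (\<forall>m\<in>M. \<exists>f\<in>F. mon_dominated f m)"
proof -
  obtain P where "P \<subseteq> order_profile ` M" and "finite P"
    and P: "\<forall>c\<in>order_profile ` M. \<exists>p\<in>P. \<forall>v\<in>UNIV. p v \<le> c v"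
    using finite_dominating_subset[of "UNIV :: 'v set" "order_profile ` M"] by auto
  then obtain F where "F \<subseteq> M" and "finite F" and "P = order_profile ` F"
    using finite_subset_image[OF \<open>finite P\<close> \<open>P \<subseteq> order_profile ` M\<close>] by blast
  have "\<exists>f\<in>F. mon_dominated f m" if "m \<in> M" for m
  proof -
    obtain f where "f \<in> F" and "\<And>v. order_profile f v \<le> order_profile m v"
      using P \<open>m \<in> M\<close> unfolding \<open>P = order_profile ` F\<close> by blast
    then show ?thesis by (blast intro: mon_dominated_if_order_profile_le le_funI)
  qed
  with \<open>F \<subseteq> M\<close> \<open>finite F\<close> show ?thesis by blast
qed

lemma rwm_monomial_ideal_eq_rwm_gen_basis:
  fixes I :: "('v, 'a::field) dpoly set"
  assumes "\<sigma> 1 = 1" and "is_rwm_sigma_ideal \<sigma> I"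
    and "S \<subseteq> dmonomials" and "I = ideal_gen S"
    and "\<And>m. m \<in> B \<Longrightarrow> Poly_Mapping.single m 1 \<in> I"
    and "\<And>m. Poly_Mapping.single m 1 \<in> I \<Longrightarrow> \<exists>f\<in>B. mon_dominated f m"
  shows "I = rwm_gen \<sigma> ((\<lambda>m. Poly_Mapping.single m 1) ` B)"
proof
  show "rwm_gen \<sigma> ((\<lambda>m. Poly_Mapping.single m 1) ` B) \<subseteq> I"
    unfolding rwm_gen_def using assms(2,5) by blast
next
  have "I \<subseteq> J" if J: "is_rwm_sigma_ideal \<sigma> J" and B: "(\<lambda>m. Poly_Mapping.single m 1) ` B \<subseteq> J" for J
  proof -
    have "is_ideal J" and "is_radical J" and "is_well_mixed \<sigma> J"
      using J unfolding is_rwm_sigma_ideal_def is_sigma_ideal_def by auto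
    have "S \<subseteq> J"
    proof
      fix s assume "s \<in> S"
      then obtain m where s: "s = Poly_Mapping.single m 1"
        using assms(3) unfolding dmonomials_def by blast
      have "s \<in> I" using \<open>s \<in> S\<close> unfolding assms(4) ideal_gen_def by blast
      then obtain f where "f \<in> B" and "mon_dominated f m" using assms(6) s by blast
      with B have "Poly_Mapping.single f 1 \<in> J" by blast
      with \<open>is_ideal J\<close> \<open>is_radical J\<close> \<open>is_well_mixed \<sigma> J\<close> assms(1) show "s \<in> J"
        unfolding s using \<open>mon_dominated f m\<close> by (rule rwm_monomial_dominated)
    qed
    with \<open>is_ideal J\<close> show "I \<subseteq> J" unfolding assms(4) ideal_gen_def by blast
  qed
  then show "I \<subseteq> rwm_gen \<sigma> ((\<lambda>m. Poly_Mapping.single m 1) ` B)"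
    unfolding rwm_gen_def by blast
qed

theorem corollary5p6:
  fixes \<sigma> :: "'a::field_char_0 \<Rightarrow> 'a"
    and I :: "('v::finite, 'a) dpoly set"
  assumes "difference_field \<sigma>"
    and "is_rwm_sigma_ideal \<sigma> I"
    and "is_monomial_ideal I"
  shows "\<exists>F. finite F \<and> F \<subseteq> dmonomials \<and> I = rwm_gen \<sigma> F"
proof -
  have "\<sigma> 1 = 1" using assms(1) unfolding difference_field_def by blast
  obtain S where "S \<subseteq> dmonomials" and "I = ideal_gen S"
    using assms(3) unfolding is_monomial_ideal_def by blast
  obtain B where "B \<subseteq> {m. Poly_Mapping.single m 1 \<in> I}" and "finite B"
    and "\<forall>m\<in>{m. Poly_Mapping.single m 1 \<in> I}. \<exists>f\<in>B. mon_dominated f m"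
    using finite_dominance_basis by blast
  then have "I = rwm_gen \<sigma> ((\<lambda>m. Poly_Mapping.single m 1) ` B)"
    using \<open>\<sigma> 1 = 1\<close> assms(2) \<open>S \<subseteq> dmonomials\<close> \<open>I = ideal_gen S\<close>
    by (intro rwm_monomial_ideal_eq_rwm_gen_basis) auto
  moreover have "(\<lambda>m. Poly_Mapping.single m 1) ` B \<subseteq> dmonomials"
    unfolding dmonomials_def by blast
  ultimately show ?thesis using \<open>finite B\<close> by blast
qed

end
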